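(* Let $T$ be a tree. No shortest path $(c_0,c_1,\dots,c_r)$ in $\mathcal{C}_3(T)$ contains a pair of opposite edges; that is, there are no indices $i\neq j$ and vertex $v$ such that both steps $c_i\to c_{i+1}$ and $c_j\to c_{j+1}$ change the color of $v$ and $c_{i+1}(v)-c_i(v)=-(c_{j+1}(v)-c_j(v))$ in $\mathbb{Z}/3\mathbb{Z}$.
   Context: Let $T$ be a finite tree with vertex set $V$ and edge set $E$. A proper 3-coloring of $T$ is a map $f\colon V\to\mathbb{Z}/3\mathbb{Z}$ with $f(u)\neq f(v)$ for every edge $uv\in E$. The 3-coloring graph $\mathcal{C}_3(T)$ has the proper 3-colorings as vertices, two colorings adjacent iff they differ at exactly one vertex. An edge $c\to c'$ of $\mathcal{C}_3(T)$ differing at $v$ changes the color of $v$ by $+1$ or by $-1$ in $\mathbb{Z}/3\mathbb{Z}$ (a $(+1)$-toggle or $(-1)$-toggle at $v$). *)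

theory Defs
  imports Main
begin

definition simple_graph :: "'a set \<Rightarrow> ('a \<Rightarrow> 'a \<Rightarrow> bool) \<Rightarrow> bool" where
  "simple_graph V E \<longleftrightarrow> finite V \<and> (\<forall>u v. E u v \<longrightarrow> u \<in> V \<and> v \<in> V)
     \<and> (\<forall>u v. E u v \<longrightarrow> E v u) \<and> (\<forall>v. \<not> E v v)"

definition is_walk :: "'a set \<Rightarrow> ('a \<Rightarrow> 'a \<Rightarrow> bool) \<Rightarrow> 'a list \<Rightarrow> bool" where
  "is_walk V E p \<longleftrightarrow> p \<noteq> [] \<and> set p \<subseteq> V \<and> (\<forall>i. Suc i < length p \<longrightarrow> E (p ! i) (p ! Suc i))"

definition connected_graph :: "'a set \<Rightarrow> ('a \<Rightarrow> 'a \<Rightarrow> bool) \<Rightarrow> bool" where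
  "connected_graph V E \<longleftrightarrow> (\<forall>u\<in>V. \<forall>v\<in>V. \<exists>p. is_walk V E p \<and> hd p = u \<and> last p = v)"

definition has_cycle :: "'a set \<Rightarrow> ('a \<Rightarrow> 'a \<Rightarrow> bool) \<Rightarrow> bool" where
  "has_cycle V E \<longleftrightarrow> (\<exists>p. is_walk V E p \<and> length p \<ge> 3 \<and> distinct p \<and> E (last p) (hd p))"

definition is_tree :: "'a set \<Rightarrow> ('a \<Rightarrow> 'a \<Rightarrow> bool) \<Rightarrow> bool" where
  "is_tree V E \<longleftrightarrow> simple_graph V E \<and> V \<noteq> {} \<and> connected_graph V E \<and> \<not> has_cycle V E"

text \<open>Colours in Z/3Z are represented by the integers 0, 1, 2; colourings are
extensional (value 0 outside V) so that they correspond bijectively to maps V \<rightarrow> Z/3Z.\<close>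
definition proper_3col :: "'a set \<Rightarrow> ('a \<Rightarrow> 'a \<Rightarrow> bool) \<Rightarrow> ('a \<Rightarrow> int) \<Rightarrow> bool" where
  "proper_3col V E f \<longleftrightarrow> (\<forall>v\<in>V. f v \<in> {0, 1, 2}) \<and> (\<forall>v. v \<notin> V \<longrightarrow> f v = 0)
     \<and> (\<forall>u v. E u v \<longrightarrow> f u \<noteq> f v)"

definition col_adj :: "'a set \<Rightarrow> ('a \<Rightarrow> 'a \<Rightarrow> bool) \<Rightarrow> ('a \<Rightarrow> int) \<Rightarrow> ('a \<Rightarrow> int) \<Rightarrow> bool" where
  "col_adj V E c d \<longleftrightarrow> proper_3col V E c \<and> proper_3col V E d \<and> (\<exists>!v. c v \<noteq> d v)"

text \<open>A path (c_0,...,c_r) in C_3(T), given as a list of length r+1.\<close>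
definition col_walk :: "'a set \<Rightarrow> ('a \<Rightarrow> 'a \<Rightarrow> bool) \<Rightarrow> ('a \<Rightarrow> int) list \<Rightarrow> bool" where
  "col_walk V E cs \<longleftrightarrow> cs \<noteq> [] \<and> (\<forall>c\<in>set cs. proper_3col V E c)
     \<and> (\<forall>i. Suc i < length cs \<longrightarrow> col_adj V E (cs ! i) (cs ! Suc i))"

definition shortest_col_path :: "'a set \<Rightarrow> ('a \<Rightarrow> 'a \<Rightarrow> bool) \<Rightarrow> ('a \<Rightarrow> int) list \<Rightarrow> bool" where
  "shortest_col_path V E cs \<longleftrightarrow> col_walk V E cs \<and>
     (\<forall>ds. col_walk V E ds \<and> hd ds = hd cs \<and> last ds = last cs \<longrightarrow> length cs \<le> length ds)"

end

theory Submission
  imports Defs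
begin

text \<open>Colourings lift to integer height functions \<open>h\<close>: for fixed edge offsets
  \<open>lo u v \<equiv> 1 (mod 3)\<close> one requires \<open>h u - h v \<in> {lo u v, lo u v + 1}\<close>, and \<open>h mod 3\<close> is then a
  proper colouring. A walk in \<open>\<C>\<^sub>3(T)\<close> lifts step by step, each toggle becoming a \<open>\<plusminus>1\<close>
  change of one height, so a path of length \<open>r\<close> whose toggles at \<open>v\<close> include an opposite
  pair has lift endpoints with \<open>\<Sum>\<^sub>w |h\<^sub>0 w - h\<^sub>r w| < r\<close>.
  Conversely, on a tree any two height functions \<open>f \<noteq> g\<close> are joined by a walk of length
  exactly \<open>\<Sum>\<^sub>w |f w - g w|\<close>: one can always lower \<open>f\<close> at a vertex where it exceeds
  \<open>min f g\<close>, since otherwise the edges blocking every such move would form a cycle.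
  Hence the path was not shortest.\<close>

lemma first_repetition:
  fixes w :: "nat \<Rightarrow> 'a"
  assumes "finite (range w)"
  obtains i j where "i < j" "w i = w j" "inj_on w {i..<j}"
proof -
  have "\<not> inj w"
    using assms finite_imageD by blast
  then have "\<exists>j. \<not> inj_on w {..j}"
    unfolding inj_def inj_on_def by (metis atMost_iff max.cobounded1 max.cobounded2)
  define j where "j = (LEAST j. \<not> inj_on w {..j})"
  have not_inj: "\<not> inj_on w {..j}"
    unfolding j_def using \<open>\<exists>j. _\<close> by (rule LeastI_ex)
  then have "j \<noteq> 0" by (auto simp: inj_on_def)
  then have "inj_on w {..<j}"
    using not_less_Least[of "j - 1" "\<lambda>j. \<not> inj_on w {..j}"] unfolding j_def[symmetric]
    by (simp add: lessThan_Suc_atMost[symmetric])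
  moreover have "{..j} = insert j {..<j}" by auto
  ultimately obtain i where "i < j" "w i = w j"
    using not_inj by auto
  moreover have "inj_on w {i..<j}"
    using \<open>inj_on w {..<j}\<close> by (rule inj_on_subset) auto
  ultimately show thesis by (rule that)
qed

lemma nonbacktracking_walk_has_cycle:
  assumes simple: "simple_graph V E" and walk_in: "range w \<subseteq> V"
    and step: "\<And>n. E (w n) (w (Suc n))" and no_backtrack: "\<And>n. w (Suc (Suc n)) \<noteq> w n"
  shows "has_cycle V E"
proof -
  have "finite (range w)"
    using simple walk_in finite_subset by (auto simp: simple_graph_def)
  then obtain i j where ij: "i < j" "w i = w j" and inj: "inj_on w {i..<j}"
    by (rule first_repetition)
  define p where "p = map w [i..<j]"
  have p_nth: "p ! k = w (i + k)" if "k < length p" for k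
    using that by (simp add: p_def)
  have "j \<noteq> Suc i"
    using step[of i] ij simple by (auto simp: simple_graph_def)
  moreover have "j \<noteq> Suc (Suc i)"
    using no_backtrack[of i] ij by auto
  ultimately have len: "length p \<ge> 3"
    using ij by (simp add: p_def)
  have "is_walk V E p"
    using len walk_in step by (auto simp: is_walk_def p_def)
  moreover have "distinct p"
    using inj by (simp add: p_def distinct_map)
  moreover have "E (last p) (hd p)"
  proof -
    have "last p = w (j - 1)" "hd p = w (Suc (j - 1))"
      using len ij by (simp_all add: p_def last_map hd_map)
    then show ?thesis using step by simp
  qed
  ultimately show ?thesis
    using len unfolding has_cycle_def by blast
qed

lemma col_adj_sym: "col_adj V E c d \<Longrightarrow> col_adj V E d c"
  unfolding col_adj_def by metis

lemma col_walk_iff: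
  "col_walk V E cs \<longleftrightarrow>
     cs \<noteq> [] \<and> (\<forall>c\<in>set cs. proper_3col V E c) \<and> successively (col_adj V E) cs"
  by (simp add: col_walk_def successively_conv_nth)

lemma col_walk_Cons:
  assumes "col_adj V E c (hd cs)" "col_walk V E cs"
  shows "col_walk V E (c # cs)"
  using assms by (cases cs) (auto simp: col_walk_iff col_adj_def)

lemma col_walk_rev:
  assumes "col_walk V E cs"
  shows "col_walk V E (rev cs)"
proof -
  have "successively (\<lambda>c d. col_adj V E d c) cs"
    using assms by (auto simp: col_walk_iff elim: successively_mono intro: col_adj_sym)
  with assms show ?thesis by (simp add: col_walk_iff)
qed

lemma col_walk_glue:
  assumes "col_walk V E cs" "col_walk V E ds" "last cs = hd ds"
  shows "col_walk V E (cs @ tl ds)" "hd (cs @ tl ds) = hd cs" "last (cs @ tl ds) = last ds"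
    "length (cs @ tl ds) + 1 = length cs + length ds"
  using assms
  by (cases ds; auto simp: col_walk_iff successively_append_iff successively_Cons)+

lemma proper_3col_range: "proper_3col V E c \<Longrightarrow> c v \<in> {0, 1, 2}"
  unfolding proper_3col_def by (cases "v \<in> V") auto

lemma col_adj_changes_one_vertex:
  assumes "col_adj V E c d"
  obtains x where "x \<in> V" "\<And>w. c w \<noteq> d w \<longleftrightarrow> w = x"
proof -
  obtain x where x: "\<And>w. c w \<noteq> d w \<longleftrightarrow> w = x"
    using assms unfolding col_adj_def by metis
  moreover have "x \<in> V"
  proof (rule ccontr)
    assume "x \<notin> V"
    then have "c x = d x" using assms by (simp add: col_adj_def proper_3col_def)
    with x[of x] show False by simp
  qed
  ultimately show thesis using that by blast
qed

lemma sum_diff_lower: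
  fixes f g :: "'a \<Rightarrow> int"
  assumes "finite V" "v \<in> V"
  shows "(\<Sum>w\<in>V. (f(v := f v - 1)) w - g w) = (\<Sum>w\<in>V. f w - g w) - 1"
proof -
  have "(\<Sum>w\<in>V. (f(v := f v - 1)) w - g w) = (\<Sum>w\<in>V. f w - g w - (if w = v then 1 else 0))"
    by (intro sum.cong) auto
  also have "\<dots> = (\<Sum>w\<in>V. f w - g w) - 1"
    using assms by (simp add: sum_subtractf)
  finally show ?thesis .
qed

definition smod3 :: "int \<Rightarrow> int" where
  "smod3 z = (z + 1) mod 3 - 1"

lemma smod3_mod3: "smod3 z mod 3 = z mod 3"
  unfolding smod3_def by presburger

lemma abs_smod3_le: "\<bar>smod3 z\<bar> \<le> 1"
  unfolding smod3_def by auto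

lemma smod3_eq_0_iff: "smod3 z = 0 \<longleftrightarrow> z mod 3 = 0"
  unfolding smod3_def by presburger

lemma smod3_uminus: "smod3 (- z) = - smod3 z"
  unfolding smod3_def by presburger

lemma smod3_cong: "z mod 3 = z' mod 3 \<Longrightarrow> smod3 z = smod3 z'"
  unfolding smod3_def by presburger

lemma offset_window:
  fixes lo x y :: int
  assumes "lo mod 3 = 1" "lo \<le> x" "x \<le> lo + 1" "\<bar>y - x\<bar> \<le> 1" "y mod 3 \<noteq> 0"
  shows "lo \<le> y" "y \<le> lo + 1"
  using assms by presburger+

lemma abs_sum_less_sum_abs:
  fixes x :: "'i \<Rightarrow> 'b :: ordered_ab_group_add_abs"
  assumes "finite A" "i \<in> A" "j \<in> A" "i \<noteq> j" and cancel: "x i + x j = 0" and "x i \<noteq> 0"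
  shows "\<bar>\<Sum>k\<in>A. x k\<bar> < (\<Sum>k\<in>A. \<bar>x k\<bar>)"
proof -
  define R where "R = A - {i} - {j}"
  have split: "sum y A = y i + (y j + sum y R)" for y :: "'i \<Rightarrow> 'b"
    using assms(1-4) by (simp add: R_def sum.remove[of A i] sum.remove[of "A - {i}" j])
  have "\<bar>\<Sum>k\<in>A. x k\<bar> = \<bar>\<Sum>k\<in>R. x k\<bar>"
    using split[of x] cancel by (simp add: add.assoc[symmetric])
  also have "\<dots> \<le> (\<Sum>k\<in>R. \<bar>x k\<bar>)"
    by (rule sum_abs)
  also have "\<dots> < \<bar>x i\<bar> + (\<bar>x j\<bar> + (\<Sum>k\<in>R. \<bar>x k\<bar>))"
    using \<open>x i \<noteq> 0\<close> by (simp add: add_pos_nonneg)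
  also have "\<dots> = (\<Sum>k\<in>A. \<bar>x k\<bar>)"
    using split[of "\<lambda>k. \<bar>x k\<bar>"] by simp
  finally show ?thesis .
qed

section \<open>Height functions\<close>

definition height_fun :: "'a set \<Rightarrow> ('a \<Rightarrow> 'a \<Rightarrow> bool) \<Rightarrow> ('a \<Rightarrow> 'a \<Rightarrow> int) \<Rightarrow> ('a \<Rightarrow> int) \<Rightarrow> bool" where
  "height_fun V E lo h \<longleftrightarrow> (\<forall>v. v \<notin> V \<longrightarrow> h v = 0) \<and>
     (\<forall>u v. E u v \<longrightarrow> lo u v \<le> h u - h v \<and> h u - h v \<le> lo u v + 1)"

definition coloring_of :: "('a \<Rightarrow> int) \<Rightarrow> 'a \<Rightarrow> int" where
  "coloring_of h = (\<lambda>v. h v mod 3)"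

lemma height_fun_edgeD:
  assumes "height_fun V E lo h" "E u v"
  shows "lo u v \<le> h u - h v" "h u - h v \<le> lo u v + 1"
  using assms by (auto simp: height_fun_def)

locale height_offsets =
  fixes V :: "'a set" and E :: "'a \<Rightarrow> 'a \<Rightarrow> bool" and lo :: "'a \<Rightarrow> 'a \<Rightarrow> int"
  assumes simple: "simple_graph V E"
    and offset_mod3: "lo u v mod 3 = 1"
begin

lemma offset_antisym:
  assumes h: "height_fun V E lo h" and e: "E u v"
  shows "lo v u = - lo u v - 1"
proof -
  have "E v u" using simple e by (auto simp: simple_graph_def)
  with h have "lo v u \<le> h v - h u" "h v - h u \<le> lo v u + 1"
    by (rule height_fun_edgeD)+
  moreover have "lo u v \<le> h u - h v" "h u - h v \<le> lo u v + 1"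
    using h e by (rule height_fun_edgeD)+
  moreover have "lo u v mod 3 = 1" "lo v u mod 3 = 1"
    by (rule offset_mod3)+
  ultimately show ?thesis by presburger
qed

lemma height_fun_min:
  assumes "height_fun V E lo f" "height_fun V E lo g"
  shows "height_fun V E lo (\<lambda>v. min (f v) (g v))"
  using assms unfolding height_fun_def by (smt (verit))

text \<open>Lowering \<open>f v\<close> can only violate the lower bound on \<open>f v - f u\<close> or, via
  \<open>offset_antisym\<close>, the upper bound on \<open>f u - f v\<close>; both happen exactly when
  \<open>f v - f u = lo v u\<close>.\<close>
lemma height_fun_lower:
  assumes f: "height_fun V E lo f" and "v \<in> V"
    and unblocked: "\<And>u. E v u \<Longrightarrow> f v - f u \<noteq> lo v u"
  shows "height_fun V E lo (f(v := f v - 1))"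
  unfolding height_fun_def
proof (intro conjI allI impI)
  fix w assume "w \<notin> V"
  then show "(f(v := f v - 1)) w = 0"
    using f \<open>v \<in> V\<close> by (auto simp: height_fun_def)
next
  fix a b assume e: "E a b"
  have "a \<noteq> b" using simple e by (auto simp: simple_graph_def)
  have bounds: "lo a b \<le> f a - f b" "f a - f b \<le> lo a b + 1"
    using f e by (rule height_fun_edgeD)+
  have "f b - f a \<noteq> - lo a b - 1" if "b = v"
    using unblocked[of a] simple e offset_antisym[OF f e] that by (auto simp: simple_graph_def)
  then show "lo a b \<le> (f(v := f v - 1)) a - (f(v := f v - 1)) b"
    and "(f(v := f v - 1)) a - (f(v := f v - 1)) b \<le> lo a b + 1"
    using bounds unblocked[of b] e \<open>a \<noteq> b\<close> by auto
qed

lemma proper_coloring_of: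
  assumes h: "height_fun V E lo h"
  shows "proper_3col V E (coloring_of h)"
  unfolding proper_3col_def coloring_of_def
proof (intro conjI ballI allI impI)
  fix v show "h v mod 3 \<in> {0, 1, 2}" by (simp; presburger)
next
  fix v assume "v \<notin> V" then show "h v mod 3 = 0" using h by (simp add: height_fun_def)
next
  fix u v assume "E u v"
  with h have "lo u v \<le> h u - h v" "h u - h v \<le> lo u v + 1"
    by (rule height_fun_edgeD)+
  with offset_mod3[of u v] show "h u mod 3 \<noteq> h v mod 3" by presburger
qed

lemma col_adj_coloring_of_lower:
  assumes "height_fun V E lo h" "height_fun V E lo (h(v := h v - 1))"
  shows "col_adj V E (coloring_of h) (coloring_of (h(v := h v - 1)))"
proof -
  have "\<exists>!w. coloring_of h w \<noteq> coloring_of (h(v := h v - 1)) w"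
  proof (rule ex1I[of _ v])
    show "coloring_of h v \<noteq> coloring_of (h(v := h v - 1)) v"
      by (simp add: coloring_of_def) presburger
  qed (auto simp: coloring_of_def split: if_splits)
  then show ?thesis
    using assms by (simp add: col_adj_def proper_coloring_of)
qed

lemma tight_successors_give_cycle:
  assumes f: "height_fun V E lo f" and "S \<subseteq> V" "s0 \<in> S"
    and tight: "\<And>v. v \<in> S \<Longrightarrow> \<exists>u\<in>S. E v u \<and> f v - f u = lo v u"
  shows "has_cycle V E"
proof -
  obtain b where b: "\<And>v. v \<in> S \<Longrightarrow> b v \<in> S \<and> E v (b v) \<and> f v - f (b v) = lo v (b v)"
    using tight by metis
  define w where "w n = (b ^^ n) s0" for n
  have w_in: "w n \<in> S" for n
    by (induction n) (simp_all add: w_def \<open>s0 \<in> S\<close> b)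
  have w_Suc: "w (Suc n) = b (w n)" for n
    by (simp add: w_def)
  have step: "E (w n) (w (Suc n))" for n
    using b w_in w_Suc by metis
  \<comment> \<open>two consecutive tight edges \<open>x y\<close> and \<open>y x\<close> would contradict \<open>offset_antisym\<close>\<close>
  have "w (Suc (Suc n)) \<noteq> w n" for n :: "nat"
  proof
    assume returns: "w (Suc (Suc n)) = w n"
    have "f (w n) - f (w (Suc n)) = lo (w n) (w (Suc n))"
      and "f (w (Suc n)) - f (w n) = lo (w (Suc n)) (w n)"
      using b[OF w_in[of n]] b[OF w_in[of "Suc n"]] returns by (simp_all add: w_Suc)
    with offset_antisym[OF f step[of n]] show False by linarith
  qed
  moreover have "range w \<subseteq> V" using w_in \<open>S \<subseteq> V\<close> by auto
  ultimately show ?thesis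
    using nonbacktracking_walk_has_cycle[of V E w] simple step by blast
qed

text \<open>If no vertex could be lowered, every maximiser of \<open>f - g\<close> would be blocked by a
  tight edge leading to another maximiser.\<close>
lemma exists_lowerable_vertex:
  assumes acyclic: "\<not> has_cycle V E"
    and f: "height_fun V E lo f" and g: "height_fun V E lo g"
    and le: "\<And>v. g v \<le> f v" and "f \<noteq> g"
  shows "\<exists>v\<in>V. g v < f v \<and> height_fun V E lo (f(v := f v - 1))"
proof (rule ccontr)
  assume none: "\<not> ?thesis"
  have "finite V" using simple by (simp add: simple_graph_def)
  obtain v0 where "f v0 \<noteq> g v0" using \<open>f \<noteq> g\<close> by blast
  then have "g v0 < f v0" using le[of v0] by simp
  moreover from this have "v0 \<in> V" using f g unfolding height_fun_def by force
  define M where "M = Max ((\<lambda>v. f v - g v) ` V)"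
  define S where "S = {v\<in>V. f v - g v = M}"
  have M_ge: "f v - g v \<le> M" if "v \<in> V" for v
    unfolding M_def using \<open>finite V\<close> that by simp
  have "M \<in> (\<lambda>v. f v - g v) ` V"
    unfolding M_def using \<open>finite V\<close> \<open>v0 \<in> V\<close> by (intro Max_in) auto
  then obtain s0 where "s0 \<in> S" unfolding S_def by auto
  have "M > 0" using M_ge[OF \<open>v0 \<in> V\<close>] \<open>g v0 < f v0\<close> by simp
  have "\<exists>u\<in>S. E v u \<and> f v - f u = lo v u" if "v \<in> S" for v
  proof -
    have "v \<in> V" "g v < f v" using that \<open>M > 0\<close> by (auto simp: S_def)
    then obtain u where e: "E v u" and tight: "f v - f u = lo v u"
      using none height_fun_lower[OF f] by blast
    have "u \<in> V" using simple e by (auto simp: simple_graph_def)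
    moreover have "lo v u \<le> g v - g u" using g e by (rule height_fun_edgeD)
    ultimately have "u \<in> S"
      using tight that M_ge[of u] by (auto simp: S_def)
    with e tight show ?thesis by blast
  qed
  then have "has_cycle V E"
    using tight_successors_give_cycle[OF f _ \<open>s0 \<in> S\<close>] by (auto simp: S_def)
  with acyclic show False ..
qed

lemma descending_walk:
  assumes acyclic: "\<not> has_cycle V E"
  shows "\<lbrakk>height_fun V E lo f; height_fun V E lo m; \<And>v. m v \<le> f v; nat (\<Sum>w\<in>V. f w - m w) = n\<rbrakk>
    \<Longrightarrow> \<exists>cs. col_walk V E cs \<and> hd cs = coloring_of f \<and> last cs = coloring_of m \<and> length cs = n + 1"
proof (induction n arbitrary: f)
  case 0
  have "finite V" using simple by (simp add: simple_graph_def)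
  moreover have "(\<Sum>w\<in>V. f w - m w) = 0"
    using "0.prems"(3,4) by (simp add: order_antisym sum_nonneg)
  ultimately have "\<forall>w\<in>V. f w = m w"
    using "0.prems"(3) by (simp add: sum_nonneg_eq_0_iff)
  with "0.prems"(1,2) have "f = m"
    by (auto simp: fun_eq_iff height_fun_def)
  with "0.prems"(1) show ?case
    by (intro exI[of _ "[coloring_of f]"]) (simp add: col_walk_def proper_coloring_of)
next
  case (Suc n)
  have "finite V" using simple by (simp add: simple_graph_def)
  have "f \<noteq> m" using Suc.prems(4) by auto
  then obtain v where "v \<in> V" "m v < f v" and f': "height_fun V E lo (f(v := f v - 1))"
    using exists_lowerable_vertex[OF acyclic Suc.prems(1,2,3)] by blast
  moreover have "nat (\<Sum>w\<in>V. (f(v := f v - 1)) w - m w) = n"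
    using sum_diff_lower[OF \<open>finite V\<close> \<open>v \<in> V\<close>, of f m] Suc.prems(4) by linarith
  ultimately obtain cs where cs: "col_walk V E cs" "hd cs = coloring_of (f(v := f v - 1))"
      "last cs = coloring_of m" "length cs = n + 1"
    using Suc.IH[OF f' Suc.prems(2)] Suc.prems(3) by fastforce
  moreover have "col_adj V E (coloring_of f) (hd cs)"
    using col_adj_coloring_of_lower[OF Suc.prems(1) f'] cs(2) by simp
  ultimately show ?case
    by (intro exI[of _ "coloring_of f # cs"]) (auto intro: col_walk_Cons)
qed

lemma height_funs_connected:
  assumes acyclic: "\<not> has_cycle V E"
    and f: "height_fun V E lo f" and g: "height_fun V E lo g"
  obtains cs where "col_walk V E cs" "hd cs = coloring_of f" "last cs = coloring_of g"
    "length cs = nat (\<Sum>w\<in>V. \<bar>f w - g w\<bar>) + 1"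
proof -
  define m where "m v = min (f v) (g v)" for v
  have m: "height_fun V E lo m"
    unfolding m_def using f g by (rule height_fun_min)
  obtain cs where cs: "col_walk V E cs" "hd cs = coloring_of f" "last cs = coloring_of m"
      "length cs = nat (\<Sum>w\<in>V. f w - m w) + 1"
    using descending_walk[OF acyclic f m _ refl] by (auto simp: m_def)
  obtain ds where ds: "col_walk V E ds" "hd ds = coloring_of g" "last ds = coloring_of m"
      "length ds = nat (\<Sum>w\<in>V. g w - m w) + 1"
    using descending_walk[OF acyclic g m _ refl] by (auto simp: m_def)
  have "(\<Sum>w\<in>V. \<bar>f w - g w\<bar>) = (\<Sum>w\<in>V. (f w - m w) + (g w - m w))"
    by (intro sum.cong) (auto simp: m_def)
  also have "\<dots> = (\<Sum>w\<in>V. f w - m w) + (\<Sum>w\<in>V. g w - m w)"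
    by (rule sum.distrib)
  finally have "(\<Sum>w\<in>V. \<bar>f w - g w\<bar>) = (\<Sum>w\<in>V. f w - m w) + (\<Sum>w\<in>V. g w - m w)" .
  moreover have "0 \<le> (\<Sum>w\<in>V. f w - m w)" "0 \<le> (\<Sum>w\<in>V. g w - m w)"
    by (simp_all add: m_def sum_nonneg)
  moreover have "last cs = hd (rev ds)" "last (rev ds) = coloring_of g"
    using cs(3) ds(1-3) by (simp_all add: col_walk_def hd_rev last_rev)
  ultimately show thesis
    using that col_walk_glue[OF cs(1) col_walk_rev[OF ds(1)]] cs ds by (simp add: nat_add_distrib)
qed

end

section \<open>Lifting walks of colourings\<close>

lemma abs_smod3_colour_change:
  assumes "proper_3col V E c" "proper_3col V E d" "c v \<noteq> d v"
  shows "\<bar>smod3 (d v - c v)\<bar> = 1"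
proof -
  have "smod3 (d v - c v) \<noteq> 0"
    using proper_3col_range[OF assms(1), of v] proper_3col_range[OF assms(2), of v] assms(3)
    by (auto simp: smod3_eq_0_iff)
  then show ?thesis using abs_smod3_le[of "d v - c v"] by linarith
qed

lemma col_adj_sum_abs_smod3:
  assumes "finite V" "col_adj V E c d"
  shows "(\<Sum>w\<in>V. \<bar>smod3 (d w - c w)\<bar>) = 1"
proof -
  obtain x where "x \<in> V" and x: "\<And>w. c w \<noteq> d w \<longleftrightarrow> w = x"
    using col_adj_changes_one_vertex[OF assms(2)] by blast
  have "\<bar>smod3 (d w - c w)\<bar> = (if w = x then 1 else 0)" for w
  proof (cases "w = x")
    case True
    with x assms(2) show ?thesis by (auto simp: col_adj_def intro: abs_smod3_colour_change)
  next
    case False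
    with x[of w] show ?thesis by (simp add: smod3_def)
  qed
  with assms(1) \<open>x \<in> V\<close> show ?thesis by simp
qed

text \<open>Every colour change along the walk is read as a \<open>\<plusminus>1\<close> step.\<close>
definition height_lift :: "('a \<Rightarrow> int) list \<Rightarrow> nat \<Rightarrow> 'a \<Rightarrow> int" where
  "height_lift cs t v = (cs ! 0) v + (\<Sum>s<t. smod3 ((cs ! Suc s) v - (cs ! s) v))"

text \<open>For colours \<open>c u \<noteq> c v\<close> in \<open>{0, 1, 2}\<close>, the unique \<open>lo \<equiv> 1 (mod 3)\<close> with
  \<open>c u - c v \<in> {lo, lo + 1}\<close>.\<close>
definition edge_offset :: "('a \<Rightarrow> int) \<Rightarrow> 'a \<Rightarrow> 'a \<Rightarrow> int" where
  "edge_offset c u v = 3 * ((c u - c v) div 3) + 1"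

lemma edge_offset_mod3: "edge_offset c u v mod 3 = 1"
  unfolding edge_offset_def by presburger

lemma height_lift_Suc:
  "height_lift cs (Suc t) v = height_lift cs t v + smod3 ((cs ! Suc t) v - (cs ! t) v)"
  by (simp add: height_lift_def)

lemma height_lift_mod3: "height_lift cs t v mod 3 = (cs ! t) v mod 3"
proof (induction t)
  case 0
  show ?case by (simp add: height_lift_def)
next
  case (Suc t)
  then have "(height_lift cs t v + smod3 ((cs ! Suc t) v - (cs ! t) v)) mod 3
      = ((cs ! t) v + ((cs ! Suc t) v - (cs ! t) v)) mod 3"
    by (intro mod_add_cong smod3_mod3)
  then show ?case by (simp add: height_lift_Suc)
qed

lemma coloring_of_height_lift:
  assumes "col_walk V E cs" "t < length cs"
  shows "coloring_of (height_lift cs t) = cs ! t"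
proof
  fix v
  have "(cs ! t) v \<in> {0, 1, 2}"
    using assms by (intro proper_3col_range[of V E]) (simp add: col_walk_def)
  then show "coloring_of (height_lift cs t) v = (cs ! t) v"
    by (auto simp: coloring_of_def height_lift_mod3)
qed

lemma height_fun_height_lift:
  assumes simple: "simple_graph V E" and walk: "col_walk V E cs" and "t < length cs"
  shows "height_fun V E (edge_offset (cs ! 0)) (height_lift cs t)"
  using assms(3)
proof (induction t)
  case 0
  have proper: "proper_3col V E (cs ! 0)"
    using walk 0 by (simp add: col_walk_def)
  show ?case
    unfolding height_fun_def
  proof (intro conjI allI impI)
    fix v assume "v \<notin> V"
    then show "height_lift cs 0 v = 0"
      using proper by (simp add: height_lift_def proper_3col_def)
  next
    fix u v assume "E u v"
    then have "(cs ! 0) u \<noteq> (cs ! 0) v"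
      using proper by (simp add: proper_3col_def)
    moreover have "(cs ! 0) u \<in> {0, 1, 2}" "(cs ! 0) v \<in> {0, 1, 2}"
      using proper_3col_range[OF proper] by simp_all
    ultimately show "edge_offset (cs ! 0) u v \<le> height_lift cs 0 u - height_lift cs 0 v"
      and "height_lift cs 0 u - height_lift cs 0 v \<le> edge_offset (cs ! 0) u v + 1"
      by (auto simp: height_lift_def edge_offset_def)
  qed
next
  case (Suc t)
  let ?lo = "edge_offset (cs ! 0)" and ?h = "height_lift cs t"
  define \<delta> where "\<delta> w = smod3 ((cs ! Suc t) w - (cs ! t) w)" for w
  have h: "height_fun V E ?lo ?h"
    using Suc by simp
  have adj: "col_adj V E (cs ! t) (cs ! Suc t)"
    using walk Suc.prems by (simp add: col_walk_def)
  then obtain x where "x \<in> V" and x: "\<And>w. (cs ! t) w \<noteq> (cs ! Suc t) w \<longleftrightarrow> w = x"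
    using col_adj_changes_one_vertex by blast
  have \<delta>_0: "\<delta> w = 0" if "w \<noteq> x" for w
    using x[of w] that by (simp add: \<delta>_def smod3_def)
  have lift_Suc: "height_lift cs (Suc t) w = ?h w + \<delta> w" for w
    by (simp add: height_lift_Suc \<delta>_def)
  show ?case
    unfolding height_fun_def
  proof (intro conjI allI impI)
    fix w assume "w \<notin> V"
    moreover have "w \<noteq> x"
      using \<open>x \<in> V\<close> \<open>w \<notin> V\<close> by blast
    ultimately show "height_lift cs (Suc t) w = 0"
      using h \<delta>_0 by (simp add: lift_Suc height_fun_def)
  next
    fix u w assume e: "E u w"
    have bounds: "?lo u w \<le> ?h u - ?h w" "?h u - ?h w \<le> ?lo u w + 1"
      using h e by (rule height_fun_edgeD)+
    have "u \<noteq> w" using simple e by (auto simp: simple_graph_def)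
    then have one_moves: "\<delta> u = 0 \<or> \<delta> w = 0"
      using \<delta>_0 by metis
    have proper: "proper_3col V E (cs ! Suc t)"
      using adj by (simp add: col_adj_def)
    then have "(cs ! Suc t) u \<noteq> (cs ! Suc t) w"
      using e by (simp add: proper_3col_def)
    then have "height_lift cs (Suc t) u mod 3 \<noteq> height_lift cs (Suc t) w mod 3"
      using proper_3col_range[OF proper, of u] proper_3col_range[OF proper, of w]
      by (auto simp: height_lift_mod3)
    then have "(height_lift cs (Suc t) u - height_lift cs (Suc t) w) mod 3 \<noteq> 0"
      by presburger
    moreover have "\<bar>(height_lift cs (Suc t) u - height_lift cs (Suc t) w) - (?h u - ?h w)\<bar> \<le> 1"
      using one_moves abs_smod3_le by (auto simp: lift_Suc \<delta>_def)
    ultimately show "?lo u w \<le> height_lift cs (Suc t) u - height_lift cs (Suc t) w"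
      and "height_lift cs (Suc t) u - height_lift cs (Suc t) w \<le> ?lo u w + 1"
      using offset_window[OF edge_offset_mod3 bounds] by blast+
  qed
qed

lemma height_lift_opposite_toggles:
  assumes simple: "simple_graph V E" and walk: "col_walk V E cs"
    and "i \<noteq> j" and i: "Suc i < length cs" and j: "Suc j < length cs"
    and changes: "(cs ! Suc i) v \<noteq> (cs ! i) v"
    and opposite: "((cs ! Suc i) v - (cs ! i) v) mod 3 = (- ((cs ! Suc j) v - (cs ! j) v)) mod 3"
  shows "(\<Sum>w\<in>V. \<bar>height_lift cs 0 w - height_lift cs (length cs - 1) w\<bar>) < int (length cs - 1)"
proof -
  define r where "r = length cs - 1"
  define \<delta> where "\<delta> s w = smod3 ((cs ! Suc s) w - (cs ! s) w)" for s w
  have "finite V" using simple by (simp add: simple_graph_def)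
  have adj: "col_adj V E (cs ! s) (cs ! Suc s)" if "s < r" for s
    using walk that by (simp add: col_walk_def r_def)
  have "v \<in> V"
  proof -
    have "i < r" using i by (simp add: r_def)
    then show ?thesis using col_adj_changes_one_vertex[OF adj] changes by metis
  qed
  have "\<delta> i v + \<delta> j v = 0"
    using smod3_cong[OF opposite] smod3_uminus[of "(cs ! Suc j) v - (cs ! j) v"]
    by (simp add: \<delta>_def)
  moreover have "\<delta> i v \<noteq> 0"
    using abs_smod3_colour_change[of V E "cs ! i" "cs ! Suc i" v] adj[of i] i changes
    by (auto simp: \<delta>_def col_adj_def r_def)
  ultimately have strict: "\<bar>\<Sum>s<r. \<delta> s v\<bar> < (\<Sum>s<r. \<bar>\<delta> s v\<bar>)"
    using i j \<open>i \<noteq> j\<close> by (intro abs_sum_less_sum_abs) (auto simp: r_def)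
  have "(\<Sum>w\<in>V. \<bar>height_lift cs 0 w - height_lift cs r w\<bar>) = (\<Sum>w\<in>V. \<bar>\<Sum>s<r. \<delta> s w\<bar>)"
    by (simp add: height_lift_def \<delta>_def)
  also have "\<dots> < (\<Sum>w\<in>V. \<Sum>s<r. \<bar>\<delta> s w\<bar>)"
    using \<open>finite V\<close> \<open>v \<in> V\<close> strict by (intro sum_strict_mono_ex1) auto
  also have "\<dots> = (\<Sum>s<r. \<Sum>w\<in>V. \<bar>\<delta> s w\<bar>)"
    by (rule sum.swap)
  also have "\<dots> = int r"
    using col_adj_sum_abs_smod3[OF \<open>finite V\<close> adj] by (simp add: \<delta>_def)
  finally show ?thesis by (simp add: r_def)
qed

lemma opposite_toggles_shortcut:
  assumes simple: "simple_graph V E" and acyclic: "\<not> has_cycle V E" and walk: "col_walk V E cs"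
    and opposite_pair: "i \<noteq> j" "Suc i < length cs" "Suc j < length cs"
      "(cs ! Suc i) v \<noteq> (cs ! i) v"
      "((cs ! Suc i) v - (cs ! i) v) mod 3 = (- ((cs ! Suc j) v - (cs ! j) v)) mod 3"
  obtains ds where "col_walk V E ds" "hd ds = hd cs" "last ds = last cs" "length ds < length cs"
proof -
  define r where "r = length cs - 1"
  have "0 < length cs" "r < length cs" "hd cs = cs ! 0" "last cs = cs ! r"
    using walk by (simp_all add: col_walk_def r_def hd_conv_nth last_conv_nth)
  interpret height_offsets V E "edge_offset (cs ! 0)"
    using simple by unfold_locales (simp_all add: edge_offset_mod3)
  obtain ds where ds: "col_walk V E ds"
    "hd ds = coloring_of (height_lift cs 0)" "last ds = coloring_of (height_lift cs r)"
    "length ds = nat (\<Sum>w\<in>V. \<bar>height_lift cs 0 w - height_lift cs r w\<bar>) + 1"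
    using height_funs_connected[OF acyclic height_fun_height_lift height_fun_height_lift]
      simple walk \<open>0 < length cs\<close> \<open>r < length cs\<close> by metis
  have "hd ds = hd cs" "last ds = last cs"
    using ds(2,3) coloring_of_height_lift[OF walk] \<open>0 < length cs\<close> \<open>r < length cs\<close>
      \<open>hd cs = cs ! 0\<close> \<open>last cs = cs ! r\<close>
    by simp_all
  moreover have "(\<Sum>w\<in>V. \<bar>height_lift cs 0 w - height_lift cs r w\<bar>) < int r"
    using height_lift_opposite_toggles[OF simple walk opposite_pair] by (simp add: r_def)
  then have "length ds \<le> r"
    using ds(4) by (simp add: Suc_le_eq nat_less_iff sum_nonneg)
  with \<open>r < length cs\<close> have "length ds < length cs"
    by simp
  ultimately show thesis
    using that ds(1) by blast
qed

theorem mainTheorem4: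
  fixes V :: "'a set" and E :: "'a \<Rightarrow> 'a \<Rightarrow> bool" and cs :: "('a \<Rightarrow> int) list"
  assumes "is_tree V E"
    and "shortest_col_path V E cs"
  shows "\<not> (\<exists>i j v. i \<noteq> j \<and> Suc i < length cs \<and> Suc j < length cs
             \<and> (cs ! Suc i) v \<noteq> (cs ! i) v \<and> (cs ! Suc j) v \<noteq> (cs ! j) v
             \<and> ((cs ! Suc i) v - (cs ! i) v) mod 3 = (- ((cs ! Suc j) v - (cs ! j) v)) mod 3)"
proof (intro notI, elim exE conjE)
  fix i j v
  assume opposite_pair: "i \<noteq> j" "Suc i < length cs" "Suc j < length cs"
    "(cs ! Suc i) v \<noteq> (cs ! i) v"
    "((cs ! Suc i) v - (cs ! i) v) mod 3 = (- ((cs ! Suc j) v - (cs ! j) v)) mod 3"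
  have "simple_graph V E" "\<not> has_cycle V E"
    using assms(1) by (simp_all add: is_tree_def)
  moreover have "col_walk V E cs"
    using assms(2) by (simp add: shortest_col_path_def)
  ultimately obtain ds where "col_walk V E ds" "hd ds = hd cs" "last ds = last cs"
      "length ds < length cs"
    using opposite_pair by (rule opposite_toggles_shortcut)
  with assms(2) show False
    by (auto simp: shortest_col_path_def)
qed

end
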